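(* Let $G$ be a finite simple graph on the vertex set $\{1,\dots,n\}$ containing a cycle of length $3$. Then, as subsets of $\mathrm{span}_{\mathbb{Q}}\{x_1,\dots,x_n,y_1,\dots,y_n\}$, the resonance variety $\mathcal{R}^1(E_2(G),d_2)$ is strictly contained in $\mathcal{R}^1(E_3(G),0)$.
   Context: Let $E$ be a complex elliptic curve, $x,y$ a basis of $H^1(E;\mathbb{Q})$ with $xy$ generating $H^2$. Let $E_2(n)$ be the quotient of the free graded-commutative algebra (for total degree) over $\mathbb{Q}$ on $x_i,y_i$ ($1\le i\le n$) of bidegree $(1,0)$ and $\omega_{ij}=\omega_{ji}$ ($i\ne j$) of bidegree $(0,1)$ by the relations $(x_i-x_j)\omega_{ij}=0$, $(y_i-y_j)\omega_{ij}=0$, $\omega_{ij}\omega_{jk}+\omega_{jk}\omega_{ki}+\omega_{ki}\omega_{ij}=0$ (distinct $i,j,k$), with the derivation $d_2$ of bidegree $(2,-1)$, $d_2x_i=d_2y_i=0$, $d_2\omega_{ij}=(x_i-x_j)(y_i-y_j)$. For a graph $G$ with edge set $\mathcal{E}$, $E_2(G)$ is the sub-differential bigraded algebra generated by all $x_i,y_i$ and the $\omega_{ij}$ with $\{i,j\}\in\mathcal{E}$ (the $E_2$ page of the rational Leray spectral sequence of $M(G)=\{P\in E^n\mid P_i\ne P_j,\ \{i,j\}\in\mathcal{E}\}\hookrightarrow E^n$), and $E_3(G)$ is its $d_2$-cohomology. Both are regarded as CDGAs with the total degree $p+q$, $E_2(G)$ with differential $d_2$ and $E_3(G)$ with zero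 differential; in both cases $H^1$ is identified with $E_2^{1,0}(G)=\mathrm{span}_{\mathbb{Q}}\{x_i,y_i\}$. For a CDGA $(A,d)$ with $A^0=\mathbb{Q}$ and $z\in H^1(A,d)$ (a degree-one cocycle), set $d_z(e)=ze+d(e)$; the first resonance variety is $\mathcal{R}^1(A)=\{z\in H^1(A,d)\mid H^1(A,d_z)\ne0\}$. *)

theory Defs
  imports Complex_Main
begin

text \<open>Generators of E_2(n): x_i, y_i (bidegree (1,0)) and omega_ij (bidegree (0,1)).
  omega_ij = omega_ji is encoded by normalising to W (min i j) (max i j).
  All generators have total degree 1 (odd), so the free graded-commutative algebra
  is the exterior algebra on them; its degree 2 part is modelled as antisymmetric
  coefficient functions on pairs of generators.\<close>

datatype gen = X nat | Y nat | W nat nat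

definition om :: "nat \<Rightarrow> nat \<Rightarrow> gen" where
  "om i j = W (min i j) (max i j)"

definition bas :: "gen \<Rightarrow> gen \<Rightarrow> rat" where
  "bas g = (\<lambda>h. if h = g then 1 else 0)"

definition xg :: "nat \<Rightarrow> gen \<Rightarrow> rat" where "xg i = bas (X i)"
definition yg :: "nat \<Rightarrow> gen \<Rightarrow> rat" where "yg i = bas (Y i)"
definition wg :: "nat \<Rightarrow> nat \<Rightarrow> gen \<Rightarrow> rat" where "wg i j = bas (om i j)"

definition vdiff :: "('a \<Rightarrow> rat) \<Rightarrow> ('a \<Rightarrow> rat) \<Rightarrow> 'a \<Rightarrow> rat" where
  "vdiff u v = (\<lambda>t. u t - v t)"

definition vadd :: "('a \<Rightarrow> rat) \<Rightarrow> ('a \<Rightarrow> rat) \<Rightarrow> 'a \<Rightarrow> rat" where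
  "vadd u v = (\<lambda>t. u t + v t)"

definition vscale :: "rat \<Rightarrow> ('a \<Rightarrow> rat) \<Rightarrow> 'a \<Rightarrow> rat" where
  "vscale c u = (\<lambda>t. c * u t)"

definition lspan :: "('a \<Rightarrow> rat) set \<Rightarrow> ('a \<Rightarrow> rat) set" where
  "lspan S = {v. \<exists>F c. finite F \<and> F \<subseteq> S \<and> v = (\<lambda>t. \<Sum>f\<in>F. c f * f t)}"

definition wedge :: "(gen \<Rightarrow> rat) \<Rightarrow> (gen \<Rightarrow> rat) \<Rightarrow> gen \<times> gen \<Rightarrow> rat" where
  "wedge u v = (\<lambda>(g, h). u g * v h - u h * v g)"

definition simple_graph :: "nat \<Rightarrow> nat set set \<Rightarrow> bool" where
  "simple_graph n E \<longleftrightarrow> (\<forall>e\<in>E. \<exists>i j. i \<noteq> j \<and> i \<in> {1..n} \<and> j \<in> {1..n} \<and> e = {i, j})"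

definition has_triangle :: "nat set set \<Rightarrow> bool" where
  "has_triangle E \<longleftrightarrow> (\<exists>i j k. i \<noteq> j \<and> j \<noteq> k \<and> i \<noteq> k \<and>
      {i, j} \<in> E \<and> {j, k} \<in> E \<and> {k, i} \<in> E)"

definition Vxy :: "nat \<Rightarrow> (gen \<Rightarrow> rat) set" where
  "Vxy n = lspan ((xg ` {1..n}) \<union> (yg ` {1..n}))"

definition A1 :: "nat \<Rightarrow> nat set set \<Rightarrow> (gen \<Rightarrow> rat) set" where
  "A1 n E = lspan ((xg ` {1..n}) \<union> (yg ` {1..n}) \<union>
                   {wg i j | i j. i \<in> {1..n} \<and> j \<in> {1..n} \<and> {i, j} \<in> E})"

text \<open>Degree two relations of E_2(n) (the ideal in degree two is their span).\<close>
definition rels :: "nat \<Rightarrow> (gen \<times> gen \<Rightarrow> rat) set" where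
  "rels n =
     {wedge (vdiff (xg i) (xg j)) (wg i j) | i j. i \<in> {1..n} \<and> j \<in> {1..n} \<and> i \<noteq> j}
   \<union> {wedge (vdiff (yg i) (yg j)) (wg i j) | i j. i \<in> {1..n} \<and> j \<in> {1..n} \<and> i \<noteq> j}
   \<union> {vadd (vadd (wedge (wg i j) (wg j k)) (wedge (wg j k) (wg k i))) (wedge (wg k i) (wg i j))
       | i j k. i \<in> {1..n} \<and> j \<in> {1..n} \<and> k \<in> {1..n} \<and> i \<noteq> j \<and> j \<noteq> k \<and> i \<noteq> k}"

definition d2 :: "nat \<Rightarrow> (gen \<Rightarrow> rat) \<Rightarrow> gen \<times> gen \<Rightarrow> rat" where
  "d2 n a = (\<lambda>t. \<Sum>i\<in>{1..n}. \<Sum>j\<in>{i<..n}.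
       a (W i j) * wedge (vdiff (xg i) (xg j)) (vdiff (yg i) (yg j)) t)"

text \<open>First resonance variety of a connected CDGA (A^0 = Q, d(1) = 0), expressed through
  its degree \<le> 2 data: H1 = the set of degree-one cocycle classes considered
  (here identified with span{x_i,y_i}), A1 = degree-one part, mult = product
  A^1 x A^1 -> A^2, d = differential A^1 -> A^2, iszero = vanishing in A^2.
  H^1(A, d_z) = ker(d_z : A^1 -> A^2) / d_z(A^0), and d_z(A^0) = Q z.\<close>
definition res1 ::
  "('a \<Rightarrow> rat) set \<Rightarrow> ('a \<Rightarrow> rat) set \<Rightarrow> (('a \<Rightarrow> rat) \<Rightarrow> ('a \<Rightarrow> rat) \<Rightarrow> 'b \<Rightarrow> rat)
    \<Rightarrow> (('a \<Rightarrow> rat) \<Rightarrow> 'b \<Rightarrow> rat) \<Rightarrow> (('b \<Rightarrow> rat) \<Rightarrow> bool) \<Rightarrow> ('a \<Rightarrow> rat) set" where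
  "res1 Hs As mu dd isz =
     {z \<in> Hs. \<exists>a\<in>As. isz (vadd (mu z a) (dd a)) \<and> (\<forall>c::rat. a \<noteq> vscale c z)}"

text \<open>R^1(E_2(G), d_2): degree two of E_2(G) sits in E_2(n)^2 = Lambda^2 / span(rels n).\<close>
definition R1_E2 :: "nat \<Rightarrow> nat set set \<Rightarrow> (gen \<Rightarrow> rat) set" where
  "R1_E2 n E = res1 (Vxy n) (A1 n E) wedge (d2 n) (\<lambda>w. w \<in> lspan (rels n))"

text \<open>E_3(G): degree one = d_2-cocycles of E_2(G)^1 (nothing to quotient by);
  degree two = cocycles of E_2(G)^2 modulo d_2(E_2(G)^1); zero differential.\<close>
definition Z1 :: "nat \<Rightarrow> nat set set \<Rightarrow> (gen \<Rightarrow> rat) set" where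
  "Z1 n E = {a \<in> A1 n E. d2 n a \<in> lspan (rels n)}"

definition R1_E3 :: "nat \<Rightarrow> nat set set \<Rightarrow> (gen \<Rightarrow> rat) set" where
  "R1_E3 n E = res1 (Vxy n) (Z1 n E) wedge (\<lambda>_ _. 0)
      (\<lambda>w. \<exists>b\<in>A1 n E. vdiff w (d2 n b) \<in> lspan (rels n))"

end

theory Submission
  imports Defs
begin

text \<open>
  The degree-two relations of \<open>E\<^sub>2(G)\<close> are bihomogeneous and have no component of
  bidegree \<open>(2,0)\<close>. Let \<open>z \<in> span{x\<^sub>i, y\<^sub>i}\<close> and \<open>a = a' + a''\<close> (bidegrees \<open>(1,0)\<close> and \<open>(0,1)\<close>)
  with \<open>z a + d\<^sub>2 a \<equiv> 0\<close>. The \<open>(2,0)\<close>-component gives \<open>z a' = - d\<^sub>2 a''\<close> on the nose. If \<open>a'\<close> is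
  not proportional to \<open>z\<close>, it is a \<open>d\<^sub>2\<close>-cocycle whose product with \<open>z\<close> is exact; otherwise
  \<open>d\<^sub>2 a'' = 0\<close> and \<open>z a''\<close>, the \<open>(1,1)\<close>-component of \<open>z a + d\<^sub>2 a\<close>, lies in the ideal of relations.
  Either way \<open>z\<close> is resonant for \<open>E\<^sub>3(G)\<close>.

  For a triangle \<open>ijk\<close>, \<open>z = x\<^sub>i - 2x\<^sub>j + x\<^sub>k\<close> and \<open>a = y\<^sub>i - 2y\<^sub>j + y\<^sub>k\<close> satisfy
  \<open>z a = d\<^sub>2(2\<omega>\<^sub>i\<^sub>j + 2\<omega>\<^sub>j\<^sub>k - \<omega>\<^sub>k\<^sub>i)\<close>, so \<open>z\<close> is resonant for \<open>E\<^sub>3(G)\<close>. But no relation involves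
  \<open>x\<^sub>m \<omega>\<^sub>p\<^sub>q\<close> or \<open>y\<^sub>m \<omega>\<^sub>p\<^sub>q\<close> with \<open>m \<notin> {p, q}\<close>, and the support of \<open>z\<close> lies in no pair \<open>{p, q}\<close>;
  hence any \<open>a\<close> resonant with \<open>z\<close> for \<open>E\<^sub>2(G)\<close> has no \<open>\<omega>\<close>-part, so \<open>z a = 0\<close> in the exterior
  algebra and \<open>a\<close> is proportional to \<open>z\<close>.
\<close>

lemma lspan_induct [consumes 1, case_names zero base add scale]:
  assumes "u \<in> lspan S"
    and "P (\<lambda>_. 0)"
    and "\<And>s. s \<in> S \<Longrightarrow> P s"
    and "\<And>u v. P u \<Longrightarrow> P v \<Longrightarrow> P (vadd u v)"
    and "\<And>c u. P u \<Longrightarrow> P (vscale c u)"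
  shows "P u"
proof -
  obtain F c where F: "finite F" "F \<subseteq> S" and u: "u = (\<lambda>t. \<Sum>f\<in>F. c f * f t)"
    using assms(1) unfolding lspan_def by blast
  have "P (\<lambda>t. \<Sum>f\<in>F. c f * f t)"
    using F
  proof (induction F rule: finite_induct)
    case empty
    then show ?case using assms(2) by simp
  next
    case (insert f F)
    have "(\<lambda>t. \<Sum>g\<in>insert f F. c g * g t) = vadd (vscale (c f) f) (\<lambda>t. \<Sum>g\<in>F. c g * g t)"
      using insert.hyps by (simp add: vadd_def vscale_def)
    then show ?case using insert assms(3-5) by simp
  qed
  then show ?thesis unfolding u .
qed

lemma lspan_base: "s \<in> S \<Longrightarrow> s \<in> lspan S"
  unfolding lspan_def by (intro CollectI exI[of _ "{s}"] exI[of _ "\<lambda>_. 1"]) auto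

lemma lspan_zero: "(\<lambda>_. 0) \<in> lspan S"
  unfolding lspan_def by (intro CollectI exI[of _ "{}"]) auto

lemma lspan_add:
  assumes "u \<in> lspan S" "v \<in> lspan S"
  shows "vadd u v \<in> lspan S"
proof -
  obtain F c where F: "finite F" "F \<subseteq> S" "u = (\<lambda>t. \<Sum>f\<in>F. c f * f t)"
    using assms(1) unfolding lspan_def by blast
  obtain G d where G: "finite G" "G \<subseteq> S" "v = (\<lambda>t. \<Sum>f\<in>G. d f * f t)"
    using assms(2) unfolding lspan_def by blast
  define e where "e f = (if f \<in> F then c f else 0) + (if f \<in> G then d f else 0)" for f
  have "vadd u v t = (\<Sum>f\<in>F \<union> G. e f * f t)" for t
  proof -
    have "(\<Sum>f\<in>F \<union> G. e f * f t) =
        (\<Sum>f\<in>F \<union> G. if f \<in> F then c f * f t else 0) + (\<Sum>f\<in>F \<union> G. if f \<in> G then d f * f t else 0)"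
      unfolding sum.distrib[symmetric] by (rule sum.cong) (auto simp: e_def distrib_right)
    also have "\<dots> = (\<Sum>f\<in>F. c f * f t) + (\<Sum>f\<in>G. d f * f t)"
      using F(1) G(1) by (simp add: sum.If_cases Int_absorb1 Int_absorb2)
    finally show ?thesis using F(3) G(3) by (simp add: vadd_def)
  qed
  then show ?thesis unfolding lspan_def using F G by blast
qed

lemma lspan_scale:
  assumes "u \<in> lspan S"
  shows "vscale c u \<in> lspan S"
proof -
  obtain F d where F: "finite F" "F \<subseteq> S" "u = (\<lambda>t. \<Sum>f\<in>F. d f * f t)"
    using assms unfolding lspan_def by blast
  have "vscale c u = (\<lambda>t. \<Sum>f\<in>F. (c * d f) * f t)"
    unfolding F(3) vscale_def by (simp add: sum_distrib_left mult.assoc)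
  then show ?thesis
    unfolding lspan_def using F(1,2) by (intro CollectI exI[of _ F] exI[of _ "\<lambda>f. c * d f"]) simp
qed

lemma lspan_vanish_at:
  assumes "u \<in> lspan S" and "\<And>s. s \<in> S \<Longrightarrow> s t = 0"
  shows "u t = 0"
  using assms(1) by (induction rule: lspan_induct) (use assms(2) in \<open>simp_all add: vadd_def vscale_def\<close>)

lemma lspan_restrict:
  assumes "u \<in> lspan S"
    and "\<And>s. s \<in> S \<Longrightarrow> (\<forall>t. \<not> P t \<longrightarrow> s t = 0) \<or> (\<forall>t. P t \<longrightarrow> s t = 0)"
  shows "(\<lambda>t. if P t then u t else 0) \<in> lspan S"
  using assms(1)
proof (induction rule: lspan_induct)
  case (base s)
  show ?case
  proof (cases "\<forall>t. \<not> P t \<longrightarrow> s t = 0")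
    case True
    then have "(\<lambda>t. if P t then s t else 0) = s" by auto
    then show ?thesis using base by (simp add: lspan_base)
  next
    case False
    then have "(\<lambda>t. if P t then s t else 0) = (\<lambda>_. 0)" using assms(2)[OF base] by auto
    then show ?thesis by (simp add: lspan_zero)
  qed
next
  case (add u v)
  have "(\<lambda>t. if P t then vadd u v t else 0) =
      vadd (\<lambda>t. if P t then u t else 0) (\<lambda>t. if P t then v t else 0)"
    by (auto simp: vadd_def)
  then show ?case using lspan_add[OF add.IH] by simp
next
  case (scale c u)
  have "(\<lambda>t. if P t then vscale c u t else 0) = vscale c (\<lambda>t. if P t then u t else 0)"
    by (auto simp: vscale_def)
  then show ?case using lspan_scale[OF scale.IH] by simp
qed (simp add: lspan_zero)

definition is_omega :: "gen \<Rightarrow> bool" where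
  "is_omega g \<longleftrightarrow> (case g of W _ _ \<Rightarrow> True | _ \<Rightarrow> False)"

lemma is_omega_simps [simp]: "is_omega (W i j)" "\<not> is_omega (X i)" "\<not> is_omega (Y i)"
  by (simp_all add: is_omega_def)

lemma xg_apply: "xg i g = (if g = X i then 1 else 0)"
  and yg_apply: "yg i g = (if g = Y i then 1 else 0)"
  and wg_apply: "wg i j g = (if g = W (min i j) (max i j) then 1 else 0)"
  by (simp_all add: xg_def yg_def wg_def bas_def om_def)

lemma xg_omega: "is_omega g \<Longrightarrow> xg i g = 0"
  and yg_omega: "is_omega g \<Longrightarrow> yg i g = 0"
  and wg_not_omega: "\<not> is_omega g \<Longrightarrow> wg i j g = 0"
  by (cases g; simp add: xg_apply yg_apply wg_apply)+

lemma Vxy_omega: "z \<in> Vxy n \<Longrightarrow> is_omega g \<Longrightarrow> z g = 0"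
  unfolding Vxy_def by (erule lspan_vanish_at) (auto simp: xg_omega yg_omega)

lemma A1_scale: "a \<in> A1 n E \<Longrightarrow> vscale c a \<in> A1 n E"
  unfolding A1_def by (rule lspan_scale)

text \<open>In degree
  two, the pairs \<open>(g, h)\<close> with \<open>is_omega g \<noteq> is_omega h\<close> span bidegree \<open>(1,1)\<close>, those with
  neither factor an \<open>\<omega>\<close> span bidegree \<open>(2,0)\<close>.\<close>

definition xy_part :: "(gen \<Rightarrow> rat) \<Rightarrow> gen \<Rightarrow> rat" where
  "xy_part a = (\<lambda>g. if \<not> is_omega g then a g else 0)"

definition omega_part :: "(gen \<Rightarrow> rat) \<Rightarrow> gen \<Rightarrow> rat" where
  "omega_part a = (\<lambda>g. if is_omega g then a g else 0)"

lemma vadd_xy_part_omega_part: "vadd (xy_part a) (omega_part a) = a"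
  by (auto simp: vadd_def xy_part_def omega_part_def)

lemma A1_xy_part: "a \<in> A1 n E \<Longrightarrow> xy_part a \<in> A1 n E"
  unfolding A1_def xy_part_def by (erule lspan_restrict) (auto simp: xg_omega yg_omega wg_not_omega)

lemma A1_omega_part: "a \<in> A1 n E \<Longrightarrow> omega_part a \<in> A1 n E"
  unfolding A1_def omega_part_def by (erule lspan_restrict) (auto simp: xg_omega yg_omega wg_not_omega)

lemma d2_add: "d2 n (vadd u v) = vadd (d2 n u) (d2 n v)"
  unfolding d2_def vadd_def by (simp add: distrib_right sum.distrib)

lemma d2_scale: "d2 n (vscale c u) = vscale c (d2 n u)"
  unfolding d2_def vscale_def by (simp add: sum_distrib_left mult.assoc)

lemma d2_cong: "(\<And>i j. a (W i j) = b (W i j)) \<Longrightarrow> d2 n a = d2 n b"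
  unfolding d2_def by simp

lemma d2_eq_zero: "(\<And>i j. a (W i j) = 0) \<Longrightarrow> d2 n a = (\<lambda>_. 0)"
  unfolding d2_def by simp

lemma d2_omega: "is_omega g \<or> is_omega h \<Longrightarrow> d2 n a (g, h) = 0"
  unfolding d2_def by (auto simp: wedge_def vdiff_def xg_omega yg_omega)

lemma d2_wg:
  assumes "i \<noteq> j" "i \<in> {1..n}" "j \<in> {1..n}"
  shows "d2 n (wg i j) = wedge (vdiff (xg i) (xg j)) (vdiff (yg i) (yg j))"
proof
  fix t
  define p q where "p = min i j" and "q = max i j"
  have pq: "1 \<le> p" "p < q" "q \<le> n" using assms by (auto simp: p_def q_def)
  have wg_W: "wg i j (W i' j') * x = (if i' = p then if j' = q then x else 0 else 0)" for i' j' x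
    by (simp add: wg_apply p_def q_def)
  have "d2 n (wg i j) t =
      (\<Sum>i'\<in>{1..n}. if i' = p then \<Sum>j'\<in>{i'<..n}. if j' = q then
         wedge (vdiff (xg i') (xg j')) (vdiff (yg i') (yg j')) t else 0 else 0)"
    unfolding d2_def wg_W by (intro sum.cong refl) simp
  also have "\<dots> = wedge (vdiff (xg p) (xg q)) (vdiff (yg p) (yg q)) t"
    using pq by (simp add: sum.delta')
  also have "\<dots> = wedge (vdiff (xg i) (xg j)) (vdiff (yg i) (yg j)) t"
    by (cases "i < j") (auto simp: p_def q_def wedge_def vdiff_def algebra_simps)
  finally show "d2 n (wg i j) t = wedge (vdiff (xg i) (xg j)) (vdiff (yg i) (yg j)) t" .
qed

lemma rels_vanish_xy: "r \<in> rels n \<Longrightarrow> \<not> is_omega g \<Longrightarrow> \<not> is_omega h \<Longrightarrow> r (g, h) = 0"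
  unfolding rels_def by (auto simp: wedge_def vadd_def vdiff_def wg_not_omega)

lemma rels_bihomogeneous:
  assumes "r \<in> rels n"
  shows "(\<forall>t. \<not> (is_omega (fst t) \<noteq> is_omega (snd t)) \<longrightarrow> r t = 0) \<or>
    (\<forall>t. is_omega (fst t) \<noteq> is_omega (snd t) \<longrightarrow> r t = 0)"
  using assms unfolding rels_def
  by (elim UnE CollectE exE conjE)
    (auto simp: wedge_def vadd_def vdiff_def wg_not_omega xg_omega yg_omega)

lemma rels_vanish_off_edge:
  assumes "r \<in> rels n" "m \<noteq> p" "m \<noteq> q"
  shows "r (X m, W p q) = 0" and "r (Y m, W p q) = 0"
  using assms unfolding rels_def
  by (auto simp: wedge_def vadd_def vdiff_def xg_apply yg_apply wg_apply min_def max_def)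

lemma lspan_rels_vanish_xy:
  "w \<in> lspan (rels n) \<Longrightarrow> \<not> is_omega g \<Longrightarrow> \<not> is_omega h \<Longrightarrow> w (g, h) = 0"
  by (erule lspan_vanish_at) (rule rels_vanish_xy)

lemma lspan_rels_mixed_part:
  "w \<in> lspan (rels n) \<Longrightarrow>
    (\<lambda>t. if is_omega (fst t) \<noteq> is_omega (snd t) then w t else 0) \<in> lspan (rels n)"
  by (erule lspan_restrict) (rule rels_bihomogeneous)

lemma R1_E3_memI:
  assumes "z \<in> Vxy n" "a \<in> A1 n E" "d2 n a \<in> lspan (rels n)" "\<forall>c. a \<noteq> vscale c z"
    and "b \<in> A1 n E" "vdiff (wedge z a) (d2 n b) \<in> lspan (rels n)"
  shows "z \<in> R1_E3 n E"
proof -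
  have vadd_zero: "vadd u (\<lambda>_. 0) = u" for u :: "gen \<times> gen \<Rightarrow> rat"
    by (simp add: vadd_def)
  show ?thesis using assms unfolding R1_E3_def res1_def Z1_def vadd_zero by blast
qed

lemma wedge_xy_part_add_d2_eq_zero:
  assumes "z \<in> Vxy n" and "vadd (wedge z a) (d2 n a) \<in> lspan (rels n)"
  shows "vadd (wedge z (xy_part a)) (d2 n a) = (\<lambda>_. 0)"
proof (rule ext, clarify)
  fix g h
  show "vadd (wedge z (xy_part a)) (d2 n a) (g, h) = 0"
  proof (cases "is_omega g \<or> is_omega h")
    case True
    then show ?thesis
      using Vxy_omega[OF assms(1)] by (auto simp: vadd_def wedge_def xy_part_def d2_omega)
  next
    case False
    then show ?thesis
      using lspan_rels_vanish_xy[OF assms(2), of g h] by (simp add: vadd_def wedge_def xy_part_def)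
  qed
qed

lemma d2_zero: "d2 n (\<lambda>_. 0) = (\<lambda>_. 0)"
  by (rule d2_eq_zero) simp

lemma R1_E3_memI_xy_part:
  assumes "z \<in> Vxy n" "a \<in> A1 n E" "\<nexists>c. xy_part a = vscale c z"
    and "vadd (wedge z (xy_part a)) (d2 n a) = (\<lambda>_. 0)"
  shows "z \<in> R1_E3 n E"
proof (rule R1_E3_memI)
  have "d2 n (xy_part a) = (\<lambda>_. 0)"
    by (rule d2_eq_zero) (simp add: xy_part_def)
  then show "d2 n (xy_part a) \<in> lspan (rels n)"
    by (simp only: lspan_zero)
  have "d2 n (omega_part a) = d2 n a"
    by (rule d2_cong) (simp add: omega_part_def)
  then have "vdiff (wedge z (xy_part a)) (d2 n (vscale (-1) (omega_part a))) = (\<lambda>_. 0)"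
    using assms(4) unfolding d2_scale by (simp add: fun_eq_iff vdiff_def vadd_def vscale_def)
  then show "vdiff (wedge z (xy_part a)) (d2 n (vscale (-1) (omega_part a))) \<in> lspan (rels n)"
    by (simp only: lspan_zero)
qed (use assms A1_xy_part A1_omega_part A1_scale in auto)

lemma R1_E3_memI_omega_part:
  assumes z: "z \<in> Vxy n" and "a \<in> A1 n E" "\<forall>c. omega_part a \<noteq> vscale c z"
    and res: "vadd (wedge z a) (d2 n a) \<in> lspan (rels n)" and d2a: "d2 n a = (\<lambda>_. 0)"
  shows "z \<in> R1_E3 n E"
proof (rule R1_E3_memI[where b = "\<lambda>_. 0"])
  have "d2 n (omega_part a) = d2 n a"
    by (rule d2_cong) (simp add: omega_part_def)
  then show "d2 n (omega_part a) \<in> lspan (rels n)"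
    by (simp add: d2a lspan_zero)
  have "vdiff (wedge z (omega_part a)) (d2 n (\<lambda>_. 0)) =
      (\<lambda>t. if is_omega (fst t) \<noteq> is_omega (snd t) then vadd (wedge z a) (d2 n a) t else 0)"
  proof (rule ext, clarify)
    fix g h
    show "vdiff (wedge z (omega_part a)) (d2 n (\<lambda>_. 0)) (g, h) =
        (if is_omega (fst (g, h)) \<noteq> is_omega (snd (g, h)) then vadd (wedge z a) (d2 n a) (g, h) else 0)"
      by (cases "is_omega g"; cases "is_omega h")
        (auto simp: vadd_def vdiff_def wedge_def omega_part_def d2a d2_zero Vxy_omega[OF z])
  qed
  then show "vdiff (wedge z (omega_part a)) (d2 n (\<lambda>_. 0)) \<in> lspan (rels n)"
    using lspan_rels_mixed_part[OF res] by simp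
qed (use assms A1_omega_part lspan_zero A1_def in auto)

lemma R1_E2_subset_R1_E3: "R1_E2 n E \<subseteq> R1_E3 n E"
proof
  fix z assume "z \<in> R1_E2 n E"
  then obtain a where z: "z \<in> Vxy n" and a: "a \<in> A1 n E"
    and res: "vadd (wedge z a) (d2 n a) \<in> lspan (rels n)" and nonprop: "\<forall>c. a \<noteq> vscale c z"
    unfolding R1_E2_def res1_def by blast
  have cancel: "vadd (wedge z (xy_part a)) (d2 n a) = (\<lambda>_. 0)"
    using z res by (rule wedge_xy_part_add_d2_eq_zero)
  show "z \<in> R1_E3 n E"
  proof (cases "\<exists>c. xy_part a = vscale c z")
    case False
    from z a False cancel show ?thesis by (rule R1_E3_memI_xy_part)
  next
    case True
    then obtain c where c: "xy_part a = vscale c z" by blast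
    have "wedge z (xy_part a) = (\<lambda>_. 0)"
      unfolding c by (auto simp: wedge_def vscale_def)
    with cancel have d2a: "d2 n a = (\<lambda>_. 0)"
      by (simp add: fun_eq_iff vadd_def)
    have "\<forall>c'. omega_part a \<noteq> vscale c' z"
    proof (intro allI notI)
      fix c' assume "omega_part a = vscale c' z"
      then have "a = vscale (c + c') z"
        using c vadd_xy_part_omega_part[of a] by (auto simp: vadd_def vscale_def distrib_right)
      with nonprop show False by blast
    qed
    with z a res d2a show ?thesis by (intro R1_E3_memI_omega_part)
  qed
qed

lemma wedge_eq_zero_imp_proportional:
  assumes "wedge u v = (\<lambda>_. 0)" and "u g \<noteq> 0"
  shows "v = vscale (v g / u g) u"
proof
  fix h
  have "u g * v h = u h * v g"
    using fun_cong[OF assms(1), of "(g, h)"] by (simp add: wedge_def)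
  then show "v h = vscale (v g / u g) u h"
    using assms(2) by (simp add: vscale_def field_simps)
qed

lemma resonance_omega_coefficient_eq_zero:
  assumes z: "z \<in> Vxy n" and res: "vadd (wedge z a) (d2 n a) \<in> lspan (rels n)"
    and m: "m \<noteq> p" "m \<noteq> q" and zm: "z (X m) \<noteq> 0 \<or> z (Y m) \<noteq> 0"
  shows "a (W p q) = 0"
proof -
  have "vadd (wedge z a) (d2 n a) (X m, W p q) = 0" "vadd (wedge z a) (d2 n a) (Y m, W p q) = 0"
    using rels_vanish_off_edge[OF _ m] by (auto intro: lspan_vanish_at[OF res])
  then have "z (X m) * a (W p q) = 0" "z (Y m) * a (W p q) = 0"
    by (simp_all add: vadd_def wedge_def Vxy_omega[OF z] d2_omega)
  then show ?thesis using zm by auto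
qed

lemma notin_R1_E2_if_support_not_in_pair:
  assumes support: "\<And>p q. \<exists>m. m \<noteq> p \<and> m \<noteq> q \<and> (z (X m) \<noteq> 0 \<or> z (Y m) \<noteq> 0)"
  shows "z \<notin> R1_E2 n E"
proof
  assume "z \<in> R1_E2 n E"
  then obtain a where z: "z \<in> Vxy n" and res: "vadd (wedge z a) (d2 n a) \<in> lspan (rels n)"
    and nonprop: "\<forall>c. a \<noteq> vscale c z"
    unfolding R1_E2_def res1_def by blast
  have zW: "z (W p q) = 0" for p q
    using Vxy_omega[OF z] by simp
  have aW: "a (W p q) = 0" for p q
    using support[of p q] resonance_omega_coefficient_eq_zero[OF z res] by blast
  have d2a: "d2 n a = (\<lambda>_. 0)"
    by (rule d2_eq_zero) (rule aW)
  have "wedge z a = (\<lambda>_. 0)"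
  proof (rule ext, clarify)
    fix g h
    show "wedge z a (g, h) = 0"
    proof (cases "is_omega g \<or> is_omega h")
      case True
      have "z g' = 0 \<and> a g' = 0" if "is_omega g'" for g'
        using that zW aW by (cases g') auto
      then show ?thesis using True by (auto simp: wedge_def)
    next
      case False
      then show ?thesis using lspan_rels_vanish_xy[OF res, of g h] by (simp add: vadd_def d2a)
    qed
  qed
  moreover obtain g where "z g \<noteq> 0"
    using support[of 0 0] by blast
  ultimately have "a = vscale (a g / z g) z"
    by (rule wedge_eq_zero_imp_proportional)
  with nonprop show False by blast
qed

lemma triangle_witness_in_R1_E3:
  assumes distinct: "i \<noteq> j" "j \<noteq> k" "i \<noteq> k"
    and vertices: "i \<in> {1..n}" "j \<in> {1..n}" "k \<in> {1..n}"
    and edges: "{i, j} \<in> E" "{j, k} \<in> E" "{k, i} \<in> E"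
  shows "vadd (vadd (xg i) (vscale (-2) (xg j))) (xg k) \<in> R1_E3 n E"
proof -
  define z where "z = vadd (vadd (xg i) (vscale (-2) (xg j))) (xg k)"
  define a where "a = vadd (vadd (yg i) (vscale (-2) (yg j))) (yg k)"
  \<comment> \<open>With \<open>u = x\<^sub>i - x\<^sub>j\<close>, \<open>v = x\<^sub>j - x\<^sub>k\<close> and likewise \<open>u', v'\<close> for the \<open>y\<close>'s,
    \<open>z = u - v\<close> and \<open>x\<^sub>k - x\<^sub>i = - (u + v)\<close>; so \<open>z a = d\<^sub>2 b\<close> is the identity
    \<open>(u - v)(u' - v') = 2 u u' + 2 v v' - (u + v)(u' + v')\<close>.\<close>
  define b where "b = vadd (vadd (vscale 2 (wg i j)) (vscale 2 (wg j k))) (vscale (-1) (wg k i))"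
  have "z \<in> Vxy n"
    unfolding z_def Vxy_def using vertices by (intro lspan_add lspan_scale lspan_base) auto
  moreover have "a \<in> A1 n E"
    unfolding a_def A1_def using vertices by (intro lspan_add lspan_scale lspan_base) auto
  moreover have "d2 n a \<in> lspan (rels n)"
    using d2_eq_zero[of a n] lspan_zero by (simp add: a_def vadd_def vscale_def yg_apply)
  moreover have "\<forall>c. a \<noteq> vscale c z"
  proof (intro allI notI)
    fix c assume "a = vscale c z"
    then have "a (Y i) = vscale c z (Y i)" by simp
    then show False using distinct by (simp add: a_def z_def vadd_def vscale_def xg_apply yg_apply)
  qed
  moreover have "b \<in> A1 n E"
  proof -
    have "wg p q \<in> A1 n E" if "p \<in> {1..n}" "q \<in> {1..n}" "{p, q} \<in> E" for p q
      unfolding A1_def using that by (intro lspan_base) blast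
    then show ?thesis
      unfolding b_def using vertices edges unfolding A1_def by (intro lspan_add lspan_scale) simp_all
  qed
  moreover have "vdiff (wedge z a) (d2 n b) = (\<lambda>_. 0)"
  proof -
    have "d2 n b = vadd (vadd (vscale 2 (wedge (vdiff (xg i) (xg j)) (vdiff (yg i) (yg j))))
        (vscale 2 (wedge (vdiff (xg j) (xg k)) (vdiff (yg j) (yg k)))))
        (vscale (-1) (wedge (vdiff (xg k) (xg i)) (vdiff (yg k) (yg i))))"
      unfolding b_def d2_add d2_scale using d2_wg distinct vertices by auto
    then show ?thesis
      by (simp add: fun_eq_iff z_def a_def vdiff_def vadd_def vscale_def wedge_def algebra_simps)
  qed
  then have "vdiff (wedge z a) (d2 n b) \<in> lspan (rels n)"
    by (simp only: lspan_zero)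
  ultimately show ?thesis
    unfolding z_def[symmetric] by (rule R1_E3_memI)
qed

theorem lemma4p7:
  fixes n :: nat and E :: "nat set set"
  assumes "simple_graph n E" and "has_triangle E"
  shows "R1_E2 n E \<subset> R1_E3 n E"
proof -
  obtain i j k where distinct: "i \<noteq> j" "j \<noteq> k" "i \<noteq> k"
    and edges: "{i, j} \<in> E" "{j, k} \<in> E" "{k, i} \<in> E"
    using assms(2) unfolding has_triangle_def by blast
  have "e \<subseteq> {1..n}" if "e \<in> E" for e
    using assms(1) that unfolding simple_graph_def by fastforce
  from this[OF edges(1)] this[OF edges(2)]
  have vertices: "i \<in> {1..n}" "j \<in> {1..n}" "k \<in> {1..n}"
    by auto
  define z where "z = vadd (vadd (xg i) (vscale (-2) (xg j))) (xg k)"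
  have "z \<in> R1_E3 n E"
    unfolding z_def using distinct vertices edges by (rule triangle_witness_in_R1_E3)
  moreover have "z \<notin> R1_E2 n E"
  proof (rule notin_R1_E2_if_support_not_in_pair)
    fix p q
    obtain m where "m \<in> {i, j, k}" "m \<noteq> p" "m \<noteq> q"
      using distinct by blast
    then show "\<exists>m. m \<noteq> p \<and> m \<noteq> q \<and> (z (X m) \<noteq> 0 \<or> z (Y m) \<noteq> 0)"
      using distinct by (auto simp: z_def vadd_def vscale_def xg_apply)
  qed
  ultimately show ?thesis
    using R1_E2_subset_R1_E3 by blast
qed

end
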